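(* Let $n\ge0$ and let $I$ be one of the sets $\{a^nb,a\}$, $\{a^nb,b\}$, $\{b^na,a\}$, $\{b^na,b\}$, $\{ba^n,a\}$, $\{ba^n,b\}$, $\{ab^n,a\}$, $\{ab^n,b\}$, $\{a^nb,a^n\}$, $\{ba^n,a^n\}$, $\{b^na,b^n\}$, $\{ab^n,b^n\}$. Then $\vdash_I^*$ is a well quasi-order on $L^{\epsilon}_{\vdash_I}$.
   Context: For words $u,v$, the shuffle $u \sqcup\!\sqcup v$ is the set of all words $u_1v_1\cdots u_kv_k$ with $k\ge 1$, $u=u_1\cdots u_k$, $v=v_1\cdots v_k$ (pieces possibly empty). For a finite set $I$ of words, $v \vdash_I w$ means $w \in v \sqcup\!\sqcup u$ for some $u\in I$; $\vdash_I^*$ is its reflexive-transitive closure and $L^{\epsilon}_{\vdash_I}=\{w : \epsilon \vdash_I^* w\}$. A quasi-order $\le$ on $S$ is a well quasi-order iff every infinite sequence $s_1,s_2,\dots$ in $S$ has $i<j$ with $s_i\le s_j$. *)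

theory Defs
  imports Main
begin

datatype letter = a | b

type_synonym word = "letter list"

definition shuffle :: "word \<Rightarrow> word \<Rightarrow> word set" where
  "shuffle u v = {w. \<exists>us vs. length us = length vs \<and> length us \<ge> 1 \<and>
      concat us = u \<and> concat vs = v \<and> w = concat (map (\<lambda>(x, y). x @ y) (zip us vs))}"

definition step :: "word set \<Rightarrow> word \<Rightarrow> word \<Rightarrow> bool" where
  "step I v w \<longleftrightarrow> (\<exists>u\<in>I. w \<in> shuffle v u)"

definition derives :: "word set \<Rightarrow> word \<Rightarrow> word \<Rightarrow> bool" where
  "derives I = (step I)\<^sup>*\<^sup>*"

definition lang_eps :: "word set \<Rightarrow> word set" where
  "lang_eps I = {w. derives I [] w}"

definition wqo_on :: "('x \<Rightarrow> 'x \<Rightarrow> bool) \<Rightarrow> 'x set \<Rightarrow> bool" where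
  "wqo_on le S \<longleftrightarrow>
     (\<forall>x\<in>S. le x x) \<and> (\<forall>x\<in>S. \<forall>y\<in>S. \<forall>z\<in>S. le x y \<longrightarrow> le y z \<longrightarrow> le x z) \<and>
     (\<forall>s :: nat \<Rightarrow> 'x. (\<forall>i. s i \<in> S) \<longrightarrow> (\<exists>i j. i < j \<and> le (s i) (s j)))"

end

theory Submission
  imports Defs "HOL-Library.Ramsey"
begin

(*
  A derivation step inserts a generator, so derives is compatible with concatenation, and
  shuffling a word of L = lang_eps I into any word v gives a word derivable from v. Hence, if a
  word is obtained by filling words p_1, ..., p_m of L into a context c_0 _ c_1 ... _ c_m whose
  skeleton c_0 c_1 ... c_m lies in L, then it depends monotonically on the p_i, and each p_i
  derives it.

  For I = {a^n b, a}, {a^n b, a^n} and {a b^n, a}, the language L consists of the ballot words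
  for a suitable weighting of a and b (every prefix has nonnegative height) whose total height
  satisfies a divisibility condition. Cutting such a word at the last positions where its height
  takes suitable record values writes it as one of two fixed contexts filled with shorter words
  of L. Nash-Williams' minimal bad sequence argument, as in Kruskal's theorem for finitely many
  function symbols, then shows that derives is a well quasi-order on L. The other nine sets are
  images of these three under reversal and the exchange of a and b, which commute with shuffles.
*)

section \<open>Shuffles\<close>

lemma Cons_in_shufflesE:
  assumes "c # w \<in> shuffles v u"
  obtains v' where "v = c # v'" "w \<in> shuffles v' u"
    | u' where "u = c # u'" "w \<in> shuffles v u'"
  using assms by (cases v; cases u) (auto simp: Cons_in_shuffles_iff)

lemma shuffles_append:
  "w \<in> shuffles v u \<Longrightarrow> w' \<in> shuffles v' u' \<Longrightarrow> w @ w' \<in> shuffles (v @ v') (u @ u')"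
  by (induction w arbitrary: v u) (auto simp: Cons_in_shuffles_iff)

lemma append_in_shuffles: "v @ u \<in> shuffles v u"
  by (induction v) (auto intro: Cons_in_shuffles_leftI)

lemma map_shuffles: "w \<in> shuffles v u \<Longrightarrow> map f w \<in> shuffles (map f v) (map f u)"
proof (induction w arbitrary: v u)
  case (Cons c w)
  from Cons.prems show ?case
    by (cases rule: Cons_in_shufflesE) (auto intro: Cons.IH Cons_in_shuffles_leftI Cons_in_shuffles_rightI)
qed simp

lemma rev_shuffles: "w \<in> shuffles v u \<Longrightarrow> rev w \<in> shuffles (rev v) (rev u)"
proof (induction w arbitrary: v u)
  case (Cons c w)
  from Cons.prems show ?case
  proof (cases rule: Cons_in_shufflesE)
    case (1 v')
    with shuffles_append[OF Cons.IH[OF 1(2)] append_in_shuffles[of "[c]" "[]"]] show ?thesis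
      by simp
  next
    case (2 u')
    with shuffles_append[OF Cons.IH[OF 2(2)] append_in_shuffles[of "[]" "[c]"]] show ?thesis
      by simp
  qed
qed simp

lemma shuffles_assoc:
  "w \<in> shuffles v u \<Longrightarrow> u \<in> shuffles u' i \<Longrightarrow> \<exists>w'. w' \<in> shuffles v u' \<and> w \<in> shuffles w' i"
proof (induction w arbitrary: v u u' i)
  case (Cons c w)
  from Cons.prems(1) show ?case
  proof (cases rule: Cons_in_shufflesE)
    case (1 v')
    with Cons.IH[OF 1(2) Cons.prems(2)] show ?thesis
      by (metis Cons_in_shuffles_leftI)
  next
    case (2 u1)
    from Cons.prems(2)[unfolded \<open>u = c # u1\<close>] show ?thesis
    proof (cases rule: Cons_in_shufflesE)
      case (1 u'')
      with Cons.IH[OF \<open>w \<in> shuffles v u1\<close> 1(2)] show ?thesis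
        by (metis Cons_in_shuffles_leftI Cons_in_shuffles_rightI)
    next
      case (2 i')
      with Cons.IH[OF \<open>w \<in> shuffles v u1\<close> 2(2)] show ?thesis
        by (metis Cons_in_shuffles_rightI)
    qed
  qed
qed simp

lemma concat_zip_in_shuffles:
  "length us = length vs \<Longrightarrow>
   concat (map (\<lambda>(x, y). x @ y) (zip us vs)) \<in> shuffles (concat us) (concat vs)"
proof (induction us vs rule: list_induct2)
  case (Cons x xs y ys)
  from shuffles_append[OF append_in_shuffles[of x y] Cons.IH] show ?case by simp
qed simp

lemma shuffles_imp_concat_zip:
  "w \<in> shuffles v u \<Longrightarrow> \<exists>us vs. length us = length vs \<and> length us \<ge> 1 \<and>
     concat us = v \<and> concat vs = u \<and> w = concat (map (\<lambda>(x, y). x @ y) (zip us vs))"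
proof (induction w arbitrary: v u)
  case Nil
  then show ?case by (intro exI[of _ "[[]]"]) auto
next
  case (Cons c w)
  from Cons.prems show ?case
  proof (cases rule: Cons_in_shufflesE)
    case (1 v')
    with Cons.IH[of v' u] obtain us vs where "length us = length vs" "concat us = v'"
      "concat vs = u" "w = concat (map (\<lambda>(x, y). x @ y) (zip us vs))" by blast
    with 1 show ?thesis by (intro exI[of _ "[c] # us"] exI[of _ "[] # vs"]) auto
  next
    case (2 u')
    with Cons.IH[of v u'] obtain us vs where "length us = length vs" "concat us = v"
      "concat vs = u'" "w = concat (map (\<lambda>(x, y). x @ y) (zip us vs))" by blast
    with 2 show ?thesis by (intro exI[of _ "[] # us"] exI[of _ "[c] # vs"]) auto
  qed
qed

lemma shuffle_eq_shuffles: "shuffle v u = shuffles v u"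
  unfolding shuffle_def using concat_zip_in_shuffles shuffles_imp_concat_zip by blast

section \<open>Derivations\<close>

lemma step_iff_shuffles: "step I v w \<longleftrightarrow> (\<exists>u\<in>I. w \<in> shuffles v u)"
  unfolding step_def shuffle_eq_shuffles ..

lemma derives_refl [simp]: "derives I v v"
  unfolding derives_def by simp

lemma derives_trans: "derives I u v \<Longrightarrow> derives I v w \<Longrightarrow> derives I u w"
  unfolding derives_def by (rule rtranclp_trans)

lemma derives_Nil_if_mem: "u \<in> I \<Longrightarrow> derives I [] u"
  unfolding derives_def by (rule r_into_rtranclp) (auto simp: step_iff_shuffles)

lemma step_in_context:
  assumes "step I v w"
  shows "step I (p @ v @ s) (p @ w @ s)"
proof -
  from assms obtain u where "u \<in> I" "w \<in> shuffles v u" unfolding step_iff_shuffles by blast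
  moreover have "p @ w @ s \<in> shuffles (p @ v @ s) ([] @ u @ [])"
    using append_in_shuffles[of p "[]"] append_in_shuffles[of s "[]"]
    by (intro shuffles_append[OF _ shuffles_append] \<open>w \<in> shuffles v u\<close>) simp_all
  ultimately show ?thesis unfolding step_iff_shuffles by auto
qed

lemma derives_in_context: "derives I v w \<Longrightarrow> derives I (p @ v @ s) (p @ w @ s)"
  unfolding derives_def
  by (induction rule: rtranclp_induct) (auto intro: rtranclp.rtrancl_into_rtrancl step_in_context)

lemma derives_append: "derives I v v' \<Longrightarrow> derives I w w' \<Longrightarrow> derives I (v @ w) (v' @ w')"
  using derives_in_context[of I v v' "[]" w] derives_in_context[of I w w' v' "[]"]
  by (auto intro: derives_trans)

lemma derives_shuffles: "derives I [] u \<Longrightarrow> w \<in> shuffles v u \<Longrightarrow> derives I v w"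
  unfolding derives_def
proof (induction arbitrary: v w rule: rtranclp_induct)
  case (step u' u)
  from step.hyps(2) obtain i where "i \<in> I" "u \<in> shuffles u' i"
    unfolding step_iff_shuffles by blast
  moreover from shuffles_assoc[OF step.prems this(2)] obtain w' where
    "w' \<in> shuffles v u'" "w \<in> shuffles w' i" by blast
  ultimately have "(step I)\<^sup>*\<^sup>* v w'" "step I w' w"
    using step.IH unfolding step_iff_shuffles by blast+
  then show ?case by (rule rtranclp.rtrancl_into_rtrancl)
qed simp

lemma derives_insert: "derives I [] (p @ s) \<Longrightarrow> derives I v (p @ v @ s)"
  using shuffles_append[OF append_in_shuffles[of "[]" p] append_in_shuffles[of v s]]
  by (auto intro: derives_shuffles)

lemma lang_eps_subset_invariant:
  assumes "Q []" "\<And>u. u \<in> I \<Longrightarrow> Q u" "\<And>v u w. Q v \<Longrightarrow> Q u \<Longrightarrow> w \<in> shuffles v u \<Longrightarrow> Q w"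
  shows "lang_eps I \<subseteq> {w. Q w}"
proof
  fix w assume "w \<in> lang_eps I"
  then have "(step I)\<^sup>*\<^sup>* [] w" unfolding lang_eps_def derives_def by simp
  then show "w \<in> {w. Q w}"
  proof (induction rule: rtranclp_induct)
    case (step v w)
    then obtain u where "u \<in> I" "w \<in> shuffles v u" by (auto simp: step_iff_shuffles)
    with step.IH assms(2,3) show ?case by blast
  qed (simp add: assms(1))
qed

lemma rtranclp_conjugate_involution:
  assumes "\<And>x. f (f x) = x"
  shows "(\<lambda>x y. R (f x) (f y))\<^sup>*\<^sup>* x y \<longleftrightarrow> R\<^sup>*\<^sup>* (f x) (f y)"
proof
  show "(\<lambda>x y. R (f x) (f y))\<^sup>*\<^sup>* x y \<Longrightarrow> R\<^sup>*\<^sup>* (f x) (f y)"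
    by (induction rule: rtranclp_induct) auto
next
  have "R\<^sup>*\<^sup>* x' y' \<Longrightarrow> (\<lambda>x y. R (f x) (f y))\<^sup>*\<^sup>* (f x') (f y')" for x' y'
    by (induction rule: rtranclp_induct) (auto simp: assms intro: rtranclp.rtrancl_into_rtrancl)
  from this[of "f x" "f y"]
  show "R\<^sup>*\<^sup>* (f x) (f y) \<Longrightarrow> (\<lambda>x y. R (f x) (f y))\<^sup>*\<^sup>* x y"
    by (simp add: assms)
qed

lemma derives_image_involution:
  assumes inv: "\<And>w. f (f w) = w"
    and shuffles: "\<And>w v u. w \<in> shuffles v u \<Longrightarrow> f w \<in> shuffles (f v) (f u)"
  shows "derives (f ` I) v w \<longleftrightarrow> derives I (f v) (f w)"
proof -
  have "step (f ` I) v w \<longleftrightarrow> step I (f v) (f w)" for v w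
  proof
    assume "step (f ` I) v w"
    then obtain u where "u \<in> I" "w \<in> shuffles v (f u)" unfolding step_iff_shuffles by blast
    then show "step I (f v) (f w)"
      unfolding step_iff_shuffles using shuffles[of w v "f u"] inv by auto
  next
    assume "step I (f v) (f w)"
    then obtain u where "u \<in> I" "f w \<in> shuffles (f v) u" unfolding step_iff_shuffles by blast
    then show "step (f ` I) v w"
      unfolding step_iff_shuffles using shuffles[of "f w" "f v" u] inv by auto
  qed
  then have "step (f ` I) = (\<lambda>v w. step I (f v) (f w))" by blast
  then show ?thesis
    unfolding derives_def using rtranclp_conjugate_involution[OF inv, of "step I" v w] by simp
qed

lemma wqo_on_derives_image_involution:
  assumes inv: "\<And>w. f (f w) = w"
    and shuffles: "\<And>w v u. w \<in> shuffles v u \<Longrightarrow> f w \<in> shuffles (f v) (f u)"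
    and "f [] = []"
    and wqo: "wqo_on (derives I) (lang_eps I)"
  shows "wqo_on (derives (f ` I)) (lang_eps (f ` I))"
proof -
  note derives_f = derives_image_involution[OF inv shuffles]
  have lang: "w \<in> lang_eps (f ` I) \<longleftrightarrow> f w \<in> lang_eps I" for w
    unfolding lang_eps_def using derives_f[of I "[]" w] \<open>f [] = []\<close> by simp
  show ?thesis unfolding wqo_on_def
  proof (intro conjI ballI allI impI)
    fix s :: "nat \<Rightarrow> word" assume "\<forall>i. s i \<in> lang_eps (f ` I)"
    with wqo have "\<exists>i j. i < j \<and> derives I (f (s i)) (f (s j))"
      unfolding wqo_on_def lang by auto
    then show "\<exists>i j. i < j \<and> derives (f ` I) (s i) (s j)" using derives_f by blast
  qed (auto intro: derives_trans)
qed

section \<open>Almost full relations\<close>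

definition almost_full_on :: "('x \<Rightarrow> 'x \<Rightarrow> bool) \<Rightarrow> 'x set \<Rightarrow> bool" where
  "almost_full_on P A \<longleftrightarrow> (\<forall>f :: nat \<Rightarrow> 'x. (\<forall>i. f i \<in> A) \<longrightarrow> (\<exists>i j. i < j \<and> P (f i) (f j)))"

definition bad :: "('x \<Rightarrow> 'x \<Rightarrow> bool) \<Rightarrow> 'x set \<Rightarrow> (nat \<Rightarrow> 'x) \<Rightarrow> bool" where
  "bad P A f \<longleftrightarrow> (\<forall>i. f i \<in> A) \<and> (\<forall>i j. i < j \<longrightarrow> \<not> P (f i) (f j))"

lemma almost_full_on_iff_no_bad: "almost_full_on P A \<longleftrightarrow> (\<nexists>f. bad P A f)"
  unfolding almost_full_on_def bad_def by blast

lemma wqo_on_iff_almost_full_on: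
  "wqo_on P A \<longleftrightarrow> (\<forall>x\<in>A. P x x) \<and> (\<forall>x\<in>A. \<forall>y\<in>A. \<forall>z\<in>A. P x y \<longrightarrow> P y z \<longrightarrow> P x z) \<and>
     almost_full_on P A"
  unfolding wqo_on_def almost_full_on_def ..

lemma almost_full_on_imp_homogeneous_subseq:
  assumes "almost_full_on P A" "\<forall>i. f i \<in> A"
  obtains \<phi> :: "nat \<Rightarrow> nat" where "strict_mono \<phi>" "\<And>i j. i < j \<Longrightarrow> P (f (\<phi> i)) (f (\<phi> j))"
proof -
  define colour where "colour X = (if P (f (Min X)) (f (Max X)) then 0 else Suc 0)" for X :: "nat set"
  have "\<forall>x\<in>UNIV. \<forall>y\<in>UNIV. x \<noteq> y \<longrightarrow> colour {x, y} < 2"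
    by (simp add: colour_def)
  from Ramsey2[OF infinite_UNIV_nat this] obtain Y t where Y: "infinite Y" "t < 2"
    and hom: "\<And>x y. x \<in> Y \<Longrightarrow> y \<in> Y \<Longrightarrow> x \<noteq> y \<Longrightarrow> colour {x, y} = t"
    by blast
  define \<phi> where "\<phi> = enumerate Y"
  have "strict_mono \<phi>" "\<And>i. \<phi> i \<in> Y"
    unfolding \<phi>_def using Y(1) by (simp_all add: strict_mono_enumerate enumerate_in_set)
  have hom_\<phi>: "P (f (\<phi> i)) (f (\<phi> j)) \<longleftrightarrow> t = 0" if "i < j" for i j
  proof -
    have "\<phi> i < \<phi> j" using \<open>strict_mono \<phi>\<close> that by (simp add: strict_mono_less)
    moreover have "colour {\<phi> i, \<phi> j} = t"
      using hom \<open>\<phi> i < \<phi> j\<close> \<open>\<And>i. \<phi> i \<in> Y\<close> by simp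
    ultimately show ?thesis by (auto simp: colour_def split: if_splits)
  qed
  show thesis
  proof (cases "t = 0")
    case True
    with hom_\<phi> show thesis using that[OF \<open>strict_mono \<phi>\<close>] by blast
  next
    case False
    with hom_\<phi> have "bad P A (f \<circ> \<phi>)"
      unfolding bad_def using assms(2) by auto
    with assms(1) show thesis unfolding almost_full_on_iff_no_bad by blast
  qed
qed

lemma almost_full_on_lists_of_length:
  assumes "almost_full_on P A"
  shows "almost_full_on (list_all2 P) {xs. length xs = k \<and> set xs \<subseteq> A}"
proof (induction k)
  case 0
  have "list_all2 P (f 0) (f 1)" if "\<forall>i. f i \<in> {xs. length xs = 0 \<and> set xs \<subseteq> A}" for f :: "nat \<Rightarrow> 'a list"
    using that by simp
  then show ?case unfolding almost_full_on_def by blast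
next
  case (Suc k)
  show ?case unfolding almost_full_on_def
  proof (intro allI impI)
    fix f :: "nat \<Rightarrow> 'a list" assume f: "\<forall>i. f i \<in> {xs. length xs = Suc k \<and> set xs \<subseteq> A}"
    have f_Cons: "f i = hd (f i) # tl (f i)" and hd_in: "hd (f i) \<in> A" for i
      using f[rule_format, of i] by (cases "f i"; simp)+
    obtain \<phi> :: "nat \<Rightarrow> nat" where \<phi>: "strict_mono \<phi>"
      "\<And>i j. i < j \<Longrightarrow> P (hd (f (\<phi> i))) (hd (f (\<phi> j)))"
      using almost_full_on_imp_homogeneous_subseq[OF assms, of "hd \<circ> f"] hd_in by auto
    have "\<forall>i. tl (f (\<phi> i)) \<in> {xs. length xs = k \<and> set xs \<subseteq> A}"
    proof
      fix i show "tl (f (\<phi> i)) \<in> {xs. length xs = k \<and> set xs \<subseteq> A}"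
        using f[rule_format, of "\<phi> i"] by (cases "f (\<phi> i)") auto
    qed
    then obtain i j where "i < j" "list_all2 P (tl (f (\<phi> i))) (tl (f (\<phi> j)))"
      using Suc.IH[unfolded almost_full_on_def, rule_format, of "\<lambda>i. tl (f (\<phi> i))"] by blast
    with \<phi> have "list_all2 P (hd (f (\<phi> i)) # tl (f (\<phi> i))) (hd (f (\<phi> j)) # tl (f (\<phi> j)))"
      by simp
    then have "list_all2 P (f (\<phi> i)) (f (\<phi> j))" by (simp only: f_Cons[symmetric])
    moreover have "\<phi> i < \<phi> j" using \<phi>(1) \<open>i < j\<close> by (simp add: strict_mono_less)
    ultimately show "\<exists>i j. i < j \<and> list_all2 P (f i) (f j)" by blast
  qed
qed

lemma finite_range_imp_constant_subseq:
  assumes "finite K" "\<And>i. g i \<in> K"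
  obtains k and \<phi> :: "nat \<Rightarrow> nat" where "strict_mono \<phi>" "\<And>i. g (\<phi> i) = k"
proof -
  have "finite (range g)" using assms by (meson finite_subset image_subsetI)
  then obtain k where "infinite (g -` {k})" using inf_img_fin_dom infinite_UNIV_nat by blast
  then have "strict_mono (enumerate (g -` {k}))" "g (enumerate (g -` {k}) i) = k" for i
    using enumerate_in_set[of "g -` {k}" i] by (simp_all add: strict_mono_enumerate)
  then show thesis using that by blast
qed

definition bad_prefix :: "('x \<Rightarrow> 'x \<Rightarrow> bool) \<Rightarrow> 'x set \<Rightarrow> 'x list \<Rightarrow> bool" where
  "bad_prefix P A xs \<longleftrightarrow> (\<exists>f. bad P A f \<and> (\<forall>i<length xs. f i = xs ! i))"

text \<open>Nash-Williams' minimal bad sequence: each new element has least size among those for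
  which the prefix still extends to a bad sequence.\<close>

fun min_bad_prefix :: "('x \<Rightarrow> 'x \<Rightarrow> bool) \<Rightarrow> 'x set \<Rightarrow> ('x \<Rightarrow> nat) \<Rightarrow> nat \<Rightarrow> 'x list" where
  "min_bad_prefix P A sz 0 = []"
| "min_bad_prefix P A sz (Suc i) = (let xs = min_bad_prefix P A sz i in
     xs @ [ARG_MIN sz x. bad_prefix P A (xs @ [x])])"

lemma bad_prefix_snoc:
  "bad P A f \<Longrightarrow> \<forall>j<length xs. f j = xs ! j \<Longrightarrow> bad_prefix P A (xs @ [f (length xs)])"
  unfolding bad_prefix_def by (auto simp: nth_append less_Suc_eq)

lemma bad_prefix_min_bad_prefix:
  assumes "bad P A f"
  shows "bad_prefix P A (min_bad_prefix P A sz i)"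
proof (induction i)
  case 0
  show ?case using assms unfolding bad_prefix_def by auto
next
  case (Suc i)
  then obtain g where "bad P A g" "\<forall>j<length (min_bad_prefix P A sz i). g j = min_bad_prefix P A sz i ! j"
    unfolding bad_prefix_def by blast
  from bad_prefix_snoc[OF this] show ?case
    unfolding min_bad_prefix.simps Let_def by (rule arg_min_natI)
qed

lemma exists_minimal_bad:
  fixes sz :: "'x \<Rightarrow> nat"
  assumes "bad P A f"
  obtains m where "bad P A m" "\<And>i g. bad P A g \<Longrightarrow> \<forall>j<i. g j = m j \<Longrightarrow> sz (m i) \<le> sz (g i)"
proof -
  define m where "m i = (ARG_MIN sz x. bad_prefix P A (min_bad_prefix P A sz i @ [x]))" for i
  have prefix: "min_bad_prefix P A sz i = map m [0..<i]" for i
  proof (induction i)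
    case (Suc i)
    then show ?case by (simp add: m_def[of i] Let_def)
  qed simp
  have agree: "\<exists>g. bad P A g \<and> (\<forall>i<Suc j. g i = m i)" for j
    using bad_prefix_min_bad_prefix[OF assms, of sz "Suc j"]
    unfolding prefix bad_prefix_def by (simp del: upt_Suc)
  have "bad P A m"
    unfolding bad_def
  proof (intro conjI allI impI)
    fix i
    from agree[of i] obtain g where "bad P A g" "\<forall>k<Suc i. g k = m k" by blast
    then show "m i \<in> A" unfolding bad_def by (metis lessI)
  next
    fix i j :: nat assume "i < j"
    from agree[of j] obtain g where "bad P A g" "\<forall>k<Suc j. g k = m k" by blast
    moreover from \<open>i < j\<close> this(2) have "g i = m i" "g j = m j" by simp_all
    ultimately show "\<not> P (m i) (m j)" using \<open>i < j\<close> unfolding bad_def by metis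
  qed
  moreover have "sz (m i) \<le> sz (g i)" if "bad P A g" "\<forall>j<i. g j = m j" for i g
  proof -
    have "bad_prefix P A (min_bad_prefix P A sz i @ [g i])"
      using bad_prefix_snoc[OF that(1), of "map m [0..<i]"] that(2) prefix by simp
    then show ?thesis unfolding m_def by (rule arg_min_nat_le)
  qed
  ultimately show thesis using that by blast
qed

text \<open>A bad sequence of elements below \<open>m\<close>, spliced into \<open>m\<close> at the earliest index it
  comes from, would be a bad sequence beating \<open>m\<close> in size there.\<close>

lemma almost_full_on_below_minimal_bad:
  fixes sz :: "'x \<Rightarrow> nat"
  assumes trans: "\<And>x y z. P x y \<Longrightarrow> P y z \<Longrightarrow> P x z"
    and m: "bad P A m" "\<And>i g. bad P A g \<Longrightarrow> \<forall>j<i. g j = m j \<Longrightarrow> sz (m i) \<le> sz (g i)"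
    and below: "\<And>i y. y \<in> S i \<Longrightarrow> y \<in> A \<and> sz y < sz (m i) \<and> P y (m i)"
  shows "almost_full_on P (\<Union>i. S i)"
proof (rule ccontr)
  assume "\<not> almost_full_on P (\<Union>i. S i)"
  then obtain h where h: "bad P (\<Union>i. S i) h" unfolding almost_full_on_iff_no_bad by blast
  then have "\<forall>k. \<exists>i. h k \<in> S i" unfolding bad_def by blast
  then obtain \<iota> where \<iota>: "\<And>k. h k \<in> S (\<iota> k)" by metis
  obtain k0 where k0: "\<And>k. \<iota> k0 \<le> \<iota> k"
    using ex_has_least_nat[of "\<lambda>_. True" 0 \<iota>] by blast
  define g where "g i = (if i < \<iota> k0 then m i else h (k0 + (i - \<iota> k0)))" for i
  have "bad P A g"
    unfolding bad_def
  proof (intro conjI allI impI)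
    fix i show "g i \<in> A" using m(1) \<iota> below unfolding g_def bad_def by auto
  next
    fix i j :: nat assume "i < j"
    consider "j < \<iota> k0" | "i < \<iota> k0" "\<iota> k0 \<le> j" | "\<iota> k0 \<le> i" by linarith
    then show "\<not> P (g i) (g j)"
    proof cases
      case 1
      with \<open>i < j\<close> m(1) show ?thesis unfolding g_def bad_def by auto
    next
      case 2
      define k where "k = k0 + (j - \<iota> k0)"
      have "P (h k) (m (\<iota> k))" using below \<iota> by blast
      moreover have "i < \<iota> k" using 2 k0[of k] by linarith
      then have "\<not> P (m i) (m (\<iota> k))" using m(1) unfolding bad_def by blast
      ultimately show ?thesis using 2 trans unfolding g_def k_def by auto
    next
      case 3
      with \<open>i < j\<close> h show ?thesis unfolding g_def bad_def by auto
    qed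
  qed
  then have "sz (m (\<iota> k0)) \<le> sz (h k0)"
    using m(2)[of g "\<iota> k0"] unfolding g_def by simp
  moreover have "sz (h k0) < sz (m (\<iota> k0))" using below \<iota> by blast
  ultimately show False by simp
qed

theorem almost_full_on_finite_signature:
  fixes P :: "'x \<Rightarrow> 'x \<Rightarrow> bool" and sz :: "'x \<Rightarrow> nat"
    and cons :: "'k \<Rightarrow> 'x list \<Rightarrow> 'x" and ar :: "'k \<Rightarrow> nat"
  assumes trans: "\<And>x y z. P x y \<Longrightarrow> P y z \<Longrightarrow> P x z"
    and "finite K"
    and decompose: "\<And>x. x \<in> A \<Longrightarrow> \<exists>k\<in>K. \<exists>ys. length ys = ar k \<and> set ys \<subseteq> A \<and>
      x = cons k ys \<and> (\<forall>y\<in>set ys. sz y < sz x \<and> P y x)"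
    and mono: "\<And>k ys zs. list_all2 P ys zs \<Longrightarrow> P (cons k ys) (cons k zs)"
  shows "almost_full_on P A"
proof (rule ccontr)
  assume "\<not> almost_full_on P A"
  then obtain f where "bad P A f" unfolding almost_full_on_iff_no_bad by blast
  then obtain m where m: "bad P A m" "\<And>i g. bad P A g \<Longrightarrow> \<forall>j<i. g j = m j \<Longrightarrow> sz (m i) \<le> sz (g i)"
    using exists_minimal_bad by blast
  have "\<forall>i. \<exists>k\<in>K. \<exists>ys. length ys = ar k \<and> set ys \<subseteq> A \<and> m i = cons k ys \<and>
      (\<forall>y\<in>set ys. sz y < sz (m i) \<and> P y (m i))"
    using decompose m(1) unfolding bad_def by blast
  then obtain \<kappa> args where \<kappa>: "\<And>i. \<kappa> i \<in> K" "\<And>i. length (args i) = ar (\<kappa> i)"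
    "\<And>i. set (args i) \<subseteq> A" "\<And>i. m i = cons (\<kappa> i) (args i)"
    and args: "\<And>i y. y \<in> set (args i) \<Longrightarrow> sz y < sz (m i) \<and> P y (m i)"
    by metis
  have "almost_full_on P (\<Union>i. set (args i))"
    by (rule almost_full_on_below_minimal_bad[where P = P and A = A and m = m and sz = sz])
      (use trans m \<kappa>(3) args in blast)+
  then have lists: "almost_full_on (list_all2 P) {ys. length ys = ar k \<and> set ys \<subseteq> (\<Union>i. set (args i))}"
    for k by (rule almost_full_on_lists_of_length)
  obtain k and \<phi> :: "nat \<Rightarrow> nat" where "strict_mono \<phi>" "\<And>i. \<kappa> (\<phi> i) = k"
    by (rule finite_range_imp_constant_subseq[of K \<kappa>, OF \<open>finite K\<close> \<kappa>(1)]) blast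
  with \<kappa>(2) have args_\<phi>: "args (\<phi> i) \<in> {ys. length ys = ar k \<and> set ys \<subseteq> (\<Union>i. set (args i))}"
    for i by auto
  obtain i j where "i < j" "list_all2 P (args (\<phi> i)) (args (\<phi> j))"
    using lists[of k, unfolded almost_full_on_def, rule_format, OF args_\<phi>] by blast
  then have "P (m (\<phi> i)) (m (\<phi> j))" "\<phi> i < \<phi> j"
    using mono \<kappa>(4) \<open>\<And>i. \<kappa> (\<phi> i) = k\<close> \<open>strict_mono \<phi>\<close> by (simp_all add: strict_mono_less)
  with m(1) show False unfolding bad_def by blast
qed

section \<open>Words filled into contexts\<close>

text \<open>A context \<open>[c\<^sub>0, \<dots>, c\<^sub>m]\<close> with arguments \<open>[p\<^sub>1, \<dots>, p\<^sub>m]\<close> gives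
  \<open>c\<^sub>0 p\<^sub>1 c\<^sub>1 \<dots> p\<^sub>m c\<^sub>m\<close>; missing arguments count as empty words, surplus ones are dropped.\<close>

fun fill :: "word list \<Rightarrow> word list \<Rightarrow> word" where
  "fill (c # cs) (p # ps) = c @ p @ fill cs ps"
| "fill cs ps = concat cs"

definition fillings :: "word list set \<Rightarrow> word set \<Rightarrow> word set" where
  "fillings C L = {fill cs ps | cs ps.
     cs \<in> C \<and> length cs = Suc (length ps) \<and> concat cs \<noteq> [] \<and> set ps \<subseteq> L}"

lemma fillingsI:
  "cs \<in> C \<Longrightarrow> length cs = Suc (length ps) \<Longrightarrow> concat cs \<noteq> [] \<Longrightarrow> set ps \<subseteq> L \<Longrightarrow>
   w = fill cs ps \<Longrightarrow> w \<in> fillings C L"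
  unfolding fillings_def by blast

lemma fill_replicate_Nil [simp]: "fill cs (replicate k []) = concat cs"
proof (induction cs arbitrary: k)
  case (Cons c cs)
  then show ?case by (cases k) simp_all
qed simp

lemma fill_replicate_append:
  "length zs = k \<Longrightarrow> fill (replicate k [c] @ [e]) zs = concat (map ((#) c) zs) @ e"
  by (induction zs arbitrary: k) auto

lemma length_fill:
  "length ps < length cs \<Longrightarrow> length (fill cs ps) = length (concat cs) + sum_list (map length ps)"
  by (induction cs ps rule: fill.induct) auto

lemma length_fill_arg_less:
  assumes "p \<in> set ps" "length ps < length cs" "concat cs \<noteq> []"
  shows "length p < length (fill cs ps)"
proof -
  have "length p \<le> sum_list (map length ps)"
    using assms(1) by (simp add: member_le_sum_list)
  moreover have "length (concat cs) > 0" using assms(3) by (metis length_greater_0_conv)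
  ultimately show ?thesis unfolding length_fill[OF assms(2)] by linarith
qed

lemma fill_split_arg:
  "i < length ps \<Longrightarrow> length ps < length cs \<Longrightarrow>
   \<exists>pre suf. fill cs ps = pre @ ps ! i @ suf \<and> fill cs (ps[i := []]) = pre @ suf"
proof (induction cs ps arbitrary: i rule: fill.induct)
  case (1 c cs p ps)
  show ?case
  proof (cases i)
    case 0
    then show ?thesis by (intro exI[of _ c] exI[of _ "fill cs ps"]) simp
  next
    case (Suc j)
    with "1.prems" obtain pre suf where "fill cs ps = pre @ ps ! j @ suf"
      "fill cs (ps[j := []]) = pre @ suf"
      using "1.IH"[of j] by auto
    with Suc show ?thesis by (intro exI[of _ "c @ p @ pre"] exI[of _ suf]) simp
  qed
qed auto

lemma derives_fill:
  "list_all2 (derives I) ps qs \<Longrightarrow> derives I (fill cs ps) (fill cs qs)"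
proof (induction ps qs arbitrary: cs rule: list_all2_induct)
  case (Cons p ps q qs)
  then show ?case by (cases cs) (simp_all add: derives_append)
qed simp

lemma derives_arg_fill:
  assumes "derives I [] (fill cs (ps[i := []]))" "i < length ps" "length ps < length cs"
  shows "derives I (ps ! i) (fill cs ps)"
  using fill_split_arg[OF assms(2,3)] assms(1) derives_insert by metis

lemma fill_in_lang_eps:
  assumes "derives I [] (concat cs)" "set ps \<subseteq> lang_eps I"
  shows "fill cs ps \<in> lang_eps I"
proof -
  have "list_all2 (derives I) (replicate (length ps) []) ps"
    using assms(2) by (auto simp: list_all2_conv_all_nth lang_eps_def subset_iff nth_mem)
  from derives_fill[OF this, of cs] have "derives I (concat cs) (fill cs ps)" by simp
  with assms(1) show ?thesis unfolding lang_eps_def by (blast intro: derives_trans)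
qed

lemma subset_lang_eps_if_fillings:
  assumes skeleton: "\<And>cs. cs \<in> C \<Longrightarrow> derives I [] (concat cs)"
    and decompose: "L - {[]} \<subseteq> fillings C L"
  shows "L \<subseteq> lang_eps I"
proof
  fix w assume "w \<in> L"
  then show "w \<in> lang_eps I"
  proof (induction "length w" arbitrary: w rule: less_induct)
    case less
    show ?case
    proof (cases "w = []")
      case False
      with decompose less.prems obtain cs ps where "cs \<in> C" "length cs = Suc (length ps)"
        "concat cs \<noteq> []" "set ps \<subseteq> L" "w = fill cs ps" unfolding fillings_def by blast
      with less.hyps length_fill_arg_less have "set ps \<subseteq> lang_eps I" by fastforce
      with fill_in_lang_eps skeleton \<open>cs \<in> C\<close> \<open>w = fill cs ps\<close> show ?thesis by blast
    qed (simp add: lang_eps_def)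
  qed
qed

theorem wqo_on_derives_if_fillings:
  fixes I L :: "word set" and C :: "word list set"
  assumes "finite C"
    and skeleton: "\<And>cs. cs \<in> C \<Longrightarrow> derives I [] (concat cs)"
    and "lang_eps I \<subseteq> L"
    and decompose: "L - {[]} \<subseteq> fillings C L"
  shows "wqo_on (derives I) (lang_eps I)"
proof -
  have L: "L = lang_eps I"
    using subset_lang_eps_if_fillings[OF skeleton decompose] \<open>lang_eps I \<subseteq> L\<close> by blast
  have "almost_full_on (derives I) (lang_eps I)"
  proof (rule almost_full_on_finite_signature[where K = "insert [[]] C" and cons = fill
        and ar = "\<lambda>cs. length cs - 1" and sz = length])
    fix w assume "w \<in> lang_eps I"
    show "\<exists>cs\<in>insert [[]] C. \<exists>ps. length ps = length cs - 1 \<and> set ps \<subseteq> lang_eps I \<and>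
      w = fill cs ps \<and> (\<forall>p\<in>set ps. length p < length w \<and> derives I p w)"
    proof (cases "w = []")
      case False
      with decompose \<open>w \<in> lang_eps I\<close> obtain cs ps where ps: "cs \<in> C"
        "length cs = Suc (length ps)" "concat cs \<noteq> []" "set ps \<subseteq> lang_eps I" "w = fill cs ps"
        unfolding L fillings_def by blast
      have "derives I p w" if "p \<in> set ps" for p
        \<comment> \<open>the context with the hole at \<open>p\<close> emptied is itself in the language\<close>
      proof -
        from that obtain i where "i < length ps" "p = ps ! i" by (metis in_set_conv_nth)
        moreover have "set (ps[i := []]) \<subseteq> lang_eps I"
          using set_update_subset_insert ps(4) by (fastforce simp: lang_eps_def)
        then have "derives I [] (fill cs (ps[i := []]))"
          using fill_in_lang_eps[OF skeleton[OF ps(1)]] unfolding lang_eps_def by blast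
        ultimately show ?thesis using derives_arg_fill ps(2,5) by simp
      qed
      then show ?thesis using ps length_fill_arg_less[of _ ps cs]
        by (intro bexI[of _ cs] exI[of _ ps]) auto
    qed simp
  qed (fact derives_trans, simp add: \<open>finite C\<close>, fact derives_fill)
  then show ?thesis
    by (simp add: wqo_on_iff_almost_full_on) (blast intro: derives_trans)
qed

section \<open>Ballot words\<close>

definition height :: "int \<Rightarrow> int \<Rightarrow> word \<Rightarrow> int" where
  "height p q w = p * int (count_list w a) - q * int (count_list w b)"

lemma height_simps [simp]:
  "height p q [] = 0" "height p q (a # w) = p + height p q w" "height p q (b # w) = height p q w - q"
  "height p q (u @ v) = height p q u + height p q v"
  by (auto simp: height_def algebra_simps)

lemma height_replicate [simp]:
  "height p q (replicate k a) = int k * p" "height p q (replicate k b) = - int k * q"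
  by (induction k) (auto simp: algebra_simps)

lemma count_list_shuffles: "w \<in> shuffles v u \<Longrightarrow> count_list w c = count_list v c + count_list u c"
  using filter_shuffles[of "(=) c" v u] length_shuffles
  by (fastforce simp: count_list_eq_length_filter)

lemma height_shuffles: "w \<in> shuffles v u \<Longrightarrow> height p q w = height p q v + height p q u"
  by (simp add: height_def count_list_shuffles algebra_simps)

lemma height_take_Suc:
  "t < length x \<Longrightarrow> height p q (take (Suc t) x) = height p q (take t x) + height p q [x ! t]"
  by (simp add: take_Suc_conv_app_nth)

lemma height_take_add: "height p q (take (t + k) x) = height p q (take t x) + height p q (take k (drop t x))"
  by (simp add: take_add)

definition ballot :: "int \<Rightarrow> int \<Rightarrow> word \<Rightarrow> bool" where
  "ballot p q w \<longleftrightarrow> (\<forall>k. 0 \<le> height p q (take k w))"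

lemma take_shuffles: "w \<in> shuffles v u \<Longrightarrow> \<exists>i j. take k w \<in> shuffles (take i v) (take j u)"
proof (induction w arbitrary: v u k)
  case (Cons c w)
  show ?case
  proof (cases k)
    case (Suc k')
    from Cons.prems show ?thesis
    proof (cases rule: Cons_in_shufflesE)
      case (1 v')
      with Cons.IH[of v' u k'] Suc show ?thesis
        by (metis Cons_in_shuffles_leftI take_Suc_Cons)
    next
      case (2 u')
      with Cons.IH[of v u' k'] Suc show ?thesis
        by (metis Cons_in_shuffles_rightI take_Suc_Cons)
    qed
  qed (metis Nil_in_shufflesI take_0)
qed (intro exI[of _ 0]; simp)

lemma ballot_shuffles: "ballot p q v \<Longrightarrow> ballot p q u \<Longrightarrow> w \<in> shuffles v u \<Longrightarrow> ballot p q w"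
  unfolding ballot_def by (metis add_nonneg_nonneg height_shuffles take_shuffles)

lemma ballot_Nil [simp]: "ballot p q []"
  by (simp add: ballot_def)

lemma ballot_imp_height_nonneg: "ballot p q w \<Longrightarrow> 0 \<le> height p q w"
  unfolding ballot_def by (metis take_all_iff order_refl)

lemma ballot_take: "ballot p q w \<Longrightarrow> ballot p q (take t w)"
  unfolding ballot_def by (simp add: min_def)

lemma ballot_appendD: "ballot p q (u @ v) \<Longrightarrow> ballot p q u"
  using ballot_take[of p q "u @ v" "length u"] by simp

lemma ballot_drop_iff:
  "ballot p q (drop t x) \<longleftrightarrow> (\<forall>s. t \<le> s \<longrightarrow> height p q (take t x) \<le> height p q (take s x))"
  unfolding ballot_def by (metis height_take_add le_add1 le_add_diff_inverse le_add_same_cancel1)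

lemma ballot_replicate_a: "0 \<le> p \<Longrightarrow> ballot p q (replicate k a)"
  by (simp add: ballot_def min_def)

lemma ballot_snoc:
  assumes "ballot p q w" "0 \<le> height p q (w @ [c])"
  shows "ballot p q (w @ [c])"
  unfolding ballot_def
proof
  fix k
  show "0 \<le> height p q (take k (w @ [c]))"
  proof (cases "k \<le> length w")
    case False
    then have "take k (w @ [c]) = w @ [c]" by simp
    with assms(2) show ?thesis by simp
  qed (use assms(1) in \<open>simp add: ballot_def\<close>)
qed

lemma ballot_a_replicate_b: "ballot (int n) 1 (a # replicate n b)"
  unfolding ballot_def by (auto simp: take_Cons' min_def)

definition ballot_words :: "int \<Rightarrow> int \<Rightarrow> int \<Rightarrow> word set" where
  "ballot_words p q d = {w. ballot p q w \<and> d dvd height p q w}"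

lemma mem_ballot_words [simp]: "w \<in> ballot_words p q d \<longleftrightarrow> ballot p q w \<and> d dvd height p q w"
  by (simp add: ballot_words_def)

lemma lang_eps_subset_ballot_words:
  "I \<subseteq> ballot_words p q d \<Longrightarrow> lang_eps I \<subseteq> ballot_words p q d"
  unfolding ballot_words_def
  by (rule lang_eps_subset_invariant) (auto intro: ballot_shuffles simp: height_shuffles)

section \<open>Decomposing ballot words\<close>

lemma ballot_split_last_a:
  fixes q :: int
  assumes "ballot 1 q x" "1 \<le> height 1 q x" "0 \<le> q"
  obtains y z where "x = y @ a # z" "ballot 1 q y" "height 1 q y = height 1 q x - 1"
    "ballot 1 q z" "height 1 q z = 0"
proof -
  \<comment> \<open>the last prefix lower than \<open>x\<close> is followed by an \<open>a\<close>, the only letter that raises the height\<close>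
  define H where "H s = height 1 q (take s x)" for s
  define J where "J = {s. s \<le> length x \<and> H s < height 1 q x}"
  have "0 \<in> J" "finite J" using assms(2) by (auto simp: J_def H_def)
  define t where "t = Max J"
  have "t \<in> J" using \<open>0 \<in> J\<close> \<open>finite J\<close> unfolding t_def using Max_in by blast
  then have "t < length x" "H t < height 1 q x"
    unfolding J_def H_def by (auto simp: le_less)
  have above: "height 1 q x \<le> H s" if "t < s" for s
  proof (cases "s \<le> length x")
    case True
    with that have "s \<notin> J" using Max_ge[OF \<open>finite J\<close>] unfolding t_def by fastforce
    with True show ?thesis unfolding J_def by simp
  qed (simp add: H_def)
  have step: "H (Suc t) = H t + height 1 q [x ! t]"
    unfolding H_def using \<open>t < length x\<close> by (rule height_take_Suc)
  have "x ! t = a"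
  proof (rule ccontr)
    assume "x ! t \<noteq> a"
    then have "H (Suc t) \<le> H t" using step assms(3) by (cases "x ! t") auto
    with above[of "Suc t"] \<open>H t < height 1 q x\<close> show False by simp
  qed
  with step above[of "Suc t"] \<open>H t < height 1 q x\<close>
  have H_t: "H t = height 1 q x - 1" and H_Suc_t: "H (Suc t) = height 1 q x" by simp_all
  show thesis
  proof
    show "x = take t x @ a # drop (Suc t) x"
      using id_take_nth_drop[OF \<open>t < length x\<close>] \<open>x ! t = a\<close> by simp
    show "ballot 1 q (take t x)" using assms(1) by (rule ballot_take)
    show "height 1 q (take t x) = height 1 q x - 1" using H_t by (simp add: H_def)
    show "ballot 1 q (drop (Suc t) x)"
      unfolding ballot_drop_iff using above H_Suc_t by (simp add: H_def)
    have "height 1 q x = H (Suc t) + height 1 q (drop (Suc t) x)"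
      using height_simps(4)[of 1 q "take (Suc t) x" "drop (Suc t) x"] by (simp add: H_def)
    with H_Suc_t show "height 1 q (drop (Suc t) x) = 0" by simp
  qed
qed

lemma ballot_split_a_blocks:
  fixes q :: int
  assumes "ballot 1 q x" "int k \<le> height 1 q x" "0 \<le> q"
  obtains y zs where "length zs = k" "x = y @ concat (map ((#) a) zs)" "ballot 1 q y"
    "height 1 q y = height 1 q x - int k" "\<forall>z\<in>set zs. ballot 1 q z \<and> height 1 q z = 0"
proof -
  have "\<exists>y zs. length zs = k \<and> x = y @ concat (map ((#) a) zs) \<and> ballot 1 q y \<and>
    height 1 q y = height 1 q x - int k \<and> (\<forall>z\<in>set zs. ballot 1 q z \<and> height 1 q z = 0)"
    using assms(2)
  proof (induction k)
    case 0
    with assms(1) show ?case by (intro exI[of _ x] exI[of _ "[]"]) simp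
  next
    case (Suc k)
    then have "int k \<le> height 1 q x" by simp
    with Suc.IH obtain y zs where IH: "length zs = k" "x = y @ concat (map ((#) a) zs)" "ballot 1 q y"
      "height 1 q y = height 1 q x - int k" "\<forall>z\<in>set zs. ballot 1 q z \<and> height 1 q z = 0"
      by blast
    from IH(4) Suc.prems have "1 \<le> height 1 q y" by simp
    then obtain y' z where y': "y = y' @ a # z" "ballot 1 q y'" "height 1 q y' = height 1 q y - 1"
      and z: "ballot 1 q z" "height 1 q z = 0"
      by (rule ballot_split_last_a[OF IH(3) _ assms(3)])
    have "x = y' @ concat (map ((#) a) (z # zs))" using IH(2) y'(1) by simp
    moreover have "height 1 q y' = height 1 q x - int (Suc k)" using IH(4) y'(3) by simp
    ultimately show ?case using IH(1,5) y'(2) z by (intro exI[of _ y'] exI[of _ "z # zs"]) simp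
  qed
  then show thesis by (elim exE conjE) (rule that)
qed

lemma b_before_least_suffix_minimum:
  fixes p :: int and j :: nat
  assumes "int (Suc j) < p" "\<And>k. - int (Suc j) \<le> height p 1 (take k x)"
    "p dvd height p 1 x + int (Suc j)"
  obtains t where "t < length x" "x ! t = b"
    "\<And>s. Suc t \<le> s \<Longrightarrow> height p 1 (take (Suc t) x) \<le> height p 1 (take s x)"
    "p dvd height p 1 (take (Suc t) x) + int (Suc j)"
    "\<And>s. s \<le> t \<Longrightarrow> - int j \<le> height p 1 (take s x)"
proof -
  define H where "H s = height p 1 (take s x)" for s
  define T where "T = {s. s \<le> length x \<and> (\<forall>s'\<ge>s. H s \<le> H s') \<and> p dvd H s + int (Suc j)}"
  have "length x \<in> T" using assms(3) by (simp add: T_def H_def)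
  define t where "t = (LEAST s. s \<in> T)"
  have "t \<in> T" using LeastI[of "\<lambda>s. s \<in> T", OF \<open>length x \<in> T\<close>] by (simp add: t_def)
  have t_min: "t \<le> s" if "s \<in> T" for s using that Least_le unfolding t_def by metis
  have "t \<noteq> 0"
  proof
    assume "t = 0"
    with \<open>t \<in> T\<close> have "p dvd int (Suc j)" by (simp add: T_def H_def)
    with assms(1) show False by (auto dest: zdvd_imp_le)
  qed
  then obtain t' where t': "t = Suc t'" by (metis not0_implies_Suc)
  with \<open>t \<in> T\<close> have "t' < length x" by (simp add: T_def)
  have "x ! t' = b"
  proof (rule ccontr)
    assume "x ! t' \<noteq> b"
    then have H_t: "H t = H t' + p"
      using height_take_Suc[OF \<open>t' < length x\<close>] by (cases "x ! t'") (auto simp: H_def t')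
    have "H t' \<le> H s'" if "t' \<le> s'" for s'
    proof -
      from that consider "s' = t'" | "t \<le> s'" using t' by linarith
      then show ?thesis using \<open>t \<in> T\<close> H_t assms(1) by cases (auto simp: T_def)
    qed
    moreover have "p dvd H t' + int (Suc j)"
      using dvd_diff[of p "H t + int (Suc j)" p] \<open>t \<in> T\<close> H_t by (simp add: T_def)
    ultimately have "t' \<in> T" using \<open>t' < length x\<close> by (simp add: T_def)
    with t_min t' show False by fastforce
  qed
  moreover have "- int j \<le> H s" if "s \<le> t'" for s
  proof (rule ccontr)
    assume "\<not> - int j \<le> H s"
    with assms(2)[of s] have "H s = - int (Suc j)" by (simp add: H_def)
    with assms(2) \<open>t' < length x\<close> that have "s \<in> T" by (auto simp: T_def H_def)
    with t_min t' that show False by fastforce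
  qed
  ultimately show thesis
    using that[of t'] \<open>t' < length x\<close> \<open>t \<in> T\<close> by (simp add: T_def H_def t')
qed

lemma ballot_split_last_b_block:
  fixes p :: int and j :: nat
  assumes "int (Suc j) < p" "\<And>k. - int (Suc j) \<le> height p 1 (take k x)"
    "p dvd height p 1 x + int (Suc j)"
  obtains y z where "x = y @ b # z" "\<And>k. - int j \<le> height p 1 (take k y)"
    "p dvd height p 1 y + int j" "ballot p 1 z" "p dvd height p 1 z"
proof -
  obtain t where t: "t < length x" "x ! t = b"
    "\<And>s. Suc t \<le> s \<Longrightarrow> height p 1 (take (Suc t) x) \<le> height p 1 (take s x)"
    "p dvd height p 1 (take (Suc t) x) + int (Suc j)"
    "\<And>s. s \<le> t \<Longrightarrow> - int j \<le> height p 1 (take s x)"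
    using b_before_least_suffix_minimum[OF assms] by blast
  have H_Suc_t: "height p 1 (take (Suc t) x) = height p 1 (take t x) - 1"
    using height_take_Suc[OF t(1)] t(2) by simp
  show thesis
  proof
    show "x = take t x @ b # drop (Suc t) x"
      using id_take_nth_drop[OF t(1)] t(2) by simp
    show "- int j \<le> height p 1 (take k (take t x))" for k
      using t(5)[of "min k t"] by (simp add: min.commute)
    show "p dvd height p 1 (take t x) + int j"
      using t(4) H_Suc_t by (simp add: algebra_simps)
    show "ballot p 1 (drop (Suc t) x)"
      using t(3) by (simp add: ballot_drop_iff)
    have "height p 1 x = height p 1 (take (Suc t) x) + height p 1 (drop (Suc t) x)"
      using height_simps(4)[of p 1 "take (Suc t) x" "drop (Suc t) x"] by simp
    then have eq: "height p 1 (drop (Suc t) x)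
      = (height p 1 x + int (Suc j)) - (height p 1 (take (Suc t) x) + int (Suc j))"
      by simp
    show "p dvd height p 1 (drop (Suc t) x)"
      unfolding eq using assms(3) t(4) by (rule dvd_diff)
  qed
qed

lemma ballot_split_b_blocks:
  fixes p :: int and j :: nat
  assumes "int j < p" "\<And>k. - int j \<le> height p 1 (take k x)" "p dvd height p 1 x + int j"
  obtains z zs where "length zs = j" "x = z @ concat (map ((#) b) zs)"
    "\<forall>y\<in>set (z # zs). ballot p 1 y \<and> p dvd height p 1 y"
proof -
  have "\<exists>z zs. length zs = j \<and> x = z @ concat (map ((#) b) zs) \<and>
    (\<forall>y\<in>set (z # zs). ballot p 1 y \<and> p dvd height p 1 y)"
    using assms
  proof (induction j arbitrary: x)
    case 0
    then show ?case by (intro exI[of _ x] exI[of _ "[]"]) (simp add: ballot_def)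
  next
    case (Suc j x)
    then obtain y z where yz: "x = y @ b # z" "\<And>k. - int j \<le> height p 1 (take k y)"
      "p dvd height p 1 y + int j" "ballot p 1 z" "p dvd height p 1 z"
      by (elim ballot_split_last_b_block) blast+
    with Suc.IH[of y] Suc.prems(1) obtain z' zs where "length zs = j"
      "y = z' @ concat (map ((#) b) zs)" "\<forall>y\<in>set (z' # zs). ballot p 1 y \<and> p dvd height p 1 y"
      by auto
    with yz show ?case by (intro exI[of _ z'] exI[of _ "zs @ [z]"]) auto
  qed
  then show thesis by (elim exE conjE) (rule that)
qed

lemma a_before_strict_rise:
  fixes p :: int
  assumes "ballot p 1 (x @ [b])"
  obtains t where "t < length x" "x ! t = a" "p dvd height p 1 (take t x)"
    "\<And>s. t < s \<Longrightarrow> s \<le> length x \<Longrightarrow> height p 1 (take t x) < height p 1 (take s x)"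
proof -
  define w where "w = x @ [b]"
  define H where "H s = height p 1 (take s w)" for s
  define R where "R = {s. s < length w \<and> p dvd H s \<and> (\<forall>s'\<ge>s. H s \<le> H s')}"
  have "0 \<in> R" using assms by (simp add: R_def H_def ballot_def w_def)
  have "finite R" by (simp add: R_def)
  define t where "t = Max R"
  have "t \<in> R" unfolding t_def using Max_in \<open>0 \<in> R\<close> \<open>finite R\<close> by blast
  then have "t < length w" "p dvd H t" and H_t_min: "\<And>s'. t \<le> s' \<Longrightarrow> H t \<le> H s'"
    by (simp_all add: R_def)
  have above: "H t < H s" if "t < s" "s < length w" for s
  proof (rule ccontr)
    assume "\<not> H t < H s"
    with H_t_min[of s] that have "H s = H t" by simp
    with that \<open>p dvd H t\<close> H_t_min have "s \<in> R" by (simp add: R_def)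
    with that show False using Max_ge[OF \<open>finite R\<close>] unfolding t_def by fastforce
  qed
  have "w ! t = a"
  proof (rule ccontr)
    assume "w ! t \<noteq> a"
    then have "H (Suc t) = H t - 1"
      using height_take_Suc[OF \<open>t < length w\<close>] by (cases "w ! t") (auto simp: H_def)
    with H_t_min[of "Suc t"] show False by simp
  qed
  then have "t < length x" "x ! t = a"
    using \<open>t < length w\<close> by (auto simp: w_def nth_append less_Suc_eq)
  moreover have "height p 1 (take t x) < height p 1 (take s x)" if "t < s" "s \<le> length x" for s
    using above[of s] that \<open>t < length x\<close> by (simp add: H_def w_def)
  ultimately show thesis
    using that \<open>p dvd H t\<close> by (simp add: H_def w_def)
qed

lemma ballot_split_last_b:
  fixes p :: int
  assumes "ballot p 1 (x @ [b])" "p dvd height p 1 (x @ [b])"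
  obtains y v where "x = y @ a # v" "ballot p 1 y" "p dvd height p 1 y"
    "\<And>k. 1 - p \<le> height p 1 (take k v)" "p dvd height p 1 v + (p - 1)"
proof -
  obtain t where t: "t < length x" "x ! t = a" "p dvd height p 1 (take t x)"
    "\<And>s. t < s \<Longrightarrow> s \<le> length x \<Longrightarrow> height p 1 (take t x) < height p 1 (take s x)"
    using a_before_strict_rise[OF assms(1)] by blast
  have x: "x = take t x @ a # drop (Suc t) x"
    using id_take_nth_drop[OF t(1)] t(2) by simp
  have H_Suc_t: "height p 1 (take (Suc t) x) = height p 1 (take t x) + p"
    using height_take_Suc[OF t(1)] t(2) by simp
  show thesis
  proof
    show "x = take t x @ a # drop (Suc t) x" by (fact x)
    show "ballot p 1 (take t x)" by (rule ballot_take[OF ballot_appendD[OF assms(1)]])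
    show "p dvd height p 1 (take t x)" by (fact t(3))
    show "1 - p \<le> height p 1 (take k (drop (Suc t) x))" for k
    proof -
      define k' where "k' = min k (length x - Suc t)"
      have "height p 1 (take (Suc t + k') x)
        = height p 1 (take (Suc t) x) + height p 1 (take k (drop (Suc t) x))"
        using height_take_add[of p 1 "Suc t" k' x] by (simp add: k'_def min_def)
      moreover have "height p 1 (take t x) < height p 1 (take (Suc t + k') x)"
        using t(1,4) by (simp add: k'_def)
      ultimately show ?thesis using H_Suc_t by simp
    qed
    have eq: "height p 1 (drop (Suc t) x) + (p - 1) = height p 1 (x @ [b]) - height p 1 (take t x)"
      using arg_cong[OF x, of "\<lambda>x. height p 1 (x @ [b])"] by simp
    show "p dvd height p 1 (drop (Suc t) x) + (p - 1)"
      unfolding eq using assms(2) t(3) by (rule dvd_diff)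
  qed
qed

section \<open>The three basic generating sets\<close>

lemma decompose_pow_a_b_and_a:
  "ballot_words 1 (int n) 1 - {[]}
     \<subseteq> fillings {[[], [a]], [] # replicate n [a] @ [[b]]} (ballot_words 1 (int n) 1)"
proof
  fix w assume "w \<in> ballot_words 1 (int n) 1 - {[]}"
  then obtain x c where w: "w = x @ [c]" and "ballot 1 (int n) w"
    by (metis DiffE insertI1 mem_ballot_words rev_exhaust)
  then have "ballot 1 (int n) x" by (simp add: ballot_appendD)
  show "w \<in> fillings {[[], [a]], [] # replicate n [a] @ [[b]]} (ballot_words 1 (int n) 1)"
  proof (cases c)
    case a
    show ?thesis
      by (rule fillingsI[of "[[], [a]]" _ "[x]"]) (use w a \<open>ballot 1 (int n) x\<close> in simp_all)
  next
    case b
    with w ballot_imp_height_nonneg[OF \<open>ballot 1 (int n) w\<close>] have "int n \<le> height 1 (int n) x"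
      by simp
    then obtain y zs where "length zs = n" "x = y @ concat (map ((#) a) zs)" "ballot 1 (int n) y"
      "\<forall>z\<in>set zs. ballot 1 (int n) z \<and> height 1 (int n) z = 0"
      using ballot_split_a_blocks[OF \<open>ballot 1 (int n) x\<close>] by (metis of_nat_0_le_iff)
    then show ?thesis
      by (intro fillingsI[of "[] # replicate n [a] @ [[b]]" _ "y # zs"])
        (use w b in \<open>auto simp: fill_replicate_append\<close>)
  qed
qed

lemma wqo_on_derives_pow_a_b_and_a:
  "wqo_on (derives {replicate n a @ [b], [a]}) (lang_eps {replicate n a @ [b], [a]})"
proof (rule wqo_on_derives_if_fillings[OF _ _ _ decompose_pow_a_b_and_a])
  have "replicate n a @ [b] \<in> ballot_words 1 (int n) 1" "[a] \<in> ballot_words 1 (int n) 1"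
    using ballot_snoc[OF ballot_replicate_a, of 1 "int n" n b] ballot_replicate_a[of 1 "int n" 1]
    by simp_all
  then show "lang_eps {replicate n a @ [b], [a]} \<subseteq> ballot_words 1 (int n) 1"
    by (intro lang_eps_subset_ballot_words) auto
qed (auto intro: derives_Nil_if_mem)

lemma decompose_pow_a_b_and_pow_a:
  "ballot_words 1 (int n) (int n) - {[]}
     \<subseteq> fillings {[] # replicate n [a] @ [[]], [] # replicate n [a] @ [[b]]}
         (ballot_words 1 (int n) (int n))"
  (is "_ \<subseteq> fillings ?C ?L")
proof
  fix w assume "w \<in> ?L - {[]}"
  then obtain x c where w: "w = x @ [c]" and "ballot 1 (int n) w" "int n dvd height 1 (int n) w"
    by (metis DiffE insertI1 mem_ballot_words rev_exhaust)
  show "w \<in> fillings ?C ?L"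
  proof (cases c)
    case a
    with w ballot_imp_height_nonneg[of 1 "int n" x] \<open>ballot 1 (int n) w\<close>
    have "1 \<le> height 1 (int n) w" by (simp add: ballot_appendD)
    with \<open>int n dvd height 1 (int n) w\<close> have "int n \<le> height 1 (int n) w"
      by (simp add: zdvd_imp_le)
    have "n \<noteq> 0"
      using \<open>int n dvd height 1 (int n) w\<close> \<open>1 \<le> height 1 (int n) w\<close> by (cases n) auto
    from \<open>int n \<le> height 1 (int n) w\<close> obtain y zs where split: "length zs = n"
      "w = y @ concat (map ((#) a) zs)" "ballot 1 (int n) y"
      "height 1 (int n) y = height 1 (int n) w - int n"
      "\<forall>z\<in>set zs. ballot 1 (int n) z \<and> height 1 (int n) z = 0"
      using ballot_split_a_blocks[OF \<open>ballot 1 (int n) w\<close>] by (metis of_nat_0_le_iff)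
    have "set (y # zs) \<subseteq> ?L"
      using split(3-5) \<open>int n dvd height 1 (int n) w\<close> by (auto intro: dvd_diff)
    then show ?thesis
      by (rule fillingsI[of "[] # replicate n [a] @ [[]]", rotated 3])
        (use split(1,2) \<open>n \<noteq> 0\<close> in \<open>simp_all add: fill_replicate_append\<close>)
  next
    case b
    with w \<open>ballot 1 (int n) w\<close> have "ballot 1 (int n) x" "int n \<le> height 1 (int n) x"
      using ballot_imp_height_nonneg[of 1 "int n" w] by (auto simp: ballot_appendD)
    then obtain y zs where split: "length zs = n" "x = y @ concat (map ((#) a) zs)"
      "ballot 1 (int n) y" "height 1 (int n) y = height 1 (int n) x - int n"
      "\<forall>z\<in>set zs. ballot 1 (int n) z \<and> height 1 (int n) z = 0"
      using ballot_split_a_blocks by (metis of_nat_0_le_iff)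
    have "height 1 (int n) y = height 1 (int n) w" using split(4) w b by simp
    then have "set (y # zs) \<subseteq> ?L"
      using split(3,5) \<open>int n dvd height 1 (int n) w\<close> by auto
    then show ?thesis
      by (rule fillingsI[of "[] # replicate n [a] @ [[b]]", rotated 3])
        (use split(1,2) w b in \<open>simp_all add: fill_replicate_append\<close>)
  qed
qed

lemma wqo_on_derives_pow_a_b_and_pow_a:
  "wqo_on (derives {replicate n a @ [b], replicate n a}) (lang_eps {replicate n a @ [b], replicate n a})"
proof (rule wqo_on_derives_if_fillings[OF _ _ _ decompose_pow_a_b_and_pow_a])
  show "lang_eps {replicate n a @ [b], replicate n a} \<subseteq> ballot_words 1 (int n) (int n)"
    using ballot_snoc[OF ballot_replicate_a] ballot_replicate_a
    by (intro lang_eps_subset_ballot_words) auto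
qed (auto intro: derives_Nil_if_mem)

lemma decompose_a_pow_b_and_a:
  "ballot_words (int n) 1 (int n) - {[]}
     \<subseteq> fillings {[[], [a]], [[], [a]] @ replicate n [b]} (ballot_words (int n) 1 (int n))"
  (is "_ \<subseteq> fillings ?C ?L")
proof
  fix w assume "w \<in> ?L - {[]}"
  then obtain x c where w: "w = x @ [c]" and "ballot (int n) 1 w" "int n dvd height (int n) 1 w"
    by (metis DiffE insertI1 mem_ballot_words rev_exhaust)
  show "w \<in> fillings ?C ?L"
  proof (cases c)
    case a
    show ?thesis
      by (rule fillingsI[of "[[], [a]]" _ "[x]"])
        (use w a \<open>ballot (int n) 1 w\<close> \<open>int n dvd _\<close> in \<open>auto simp: ballot_appendD dvd_diff\<close>)
  next
    case b
    obtain y v where yv: "x = y @ a # v" "ballot (int n) 1 y" "int n dvd height (int n) 1 y"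
      "\<And>k. 1 - int n \<le> height (int n) 1 (take k v)" "int n dvd height (int n) 1 v + (int n - 1)"
      using ballot_split_last_b[of "int n" x] \<open>ballot (int n) 1 w\<close> \<open>int n dvd _\<close> w b by blast
    from yv(4)[of 0] obtain m where n: "n = Suc m" using not0_implies_Suc by fastforce
    obtain z zs where "length zs = m" "v = z @ concat (map ((#) b) zs)"
      "\<forall>y\<in>set (z # zs). ballot (int n) 1 y \<and> int n dvd height (int n) 1 y"
      by (rule ballot_split_b_blocks[of m "int n" v]) (use n yv(4,5) in simp_all)
    with yv(1-3) w b n show ?thesis
      by (intro fillingsI[of "[[], [a]] @ replicate n [b]" _ "y # z # zs"])
        (auto simp: fill_replicate_append replicate_append_same[symmetric])
  qed
qed

lemma wqo_on_derives_a_pow_b_and_a: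
  "wqo_on (derives {[a] @ replicate n b, [a]}) (lang_eps {[a] @ replicate n b, [a]})"
proof (rule wqo_on_derives_if_fillings[OF _ _ _ decompose_a_pow_b_and_a])
  show "lang_eps {[a] @ replicate n b, [a]} \<subseteq> ballot_words (int n) 1 (int n)"
    using ballot_a_replicate_b ballot_replicate_a[of "int n" 1 1]
    by (intro lang_eps_subset_ballot_words) auto
qed (auto intro: derives_Nil_if_mem)

section \<open>Symmetries and the main theorem\<close>

fun flip :: "letter \<Rightarrow> letter" where
  "flip a = b"
| "flip b = a"

lemma flip_flip [simp]: "flip (flip c) = c"
  by (cases c) simp_all

lemma wqo_on_derives_rev:
  "wqo_on (derives I) (lang_eps I) \<Longrightarrow> wqo_on (derives (rev ` I)) (lang_eps (rev ` I))"
  by (rule wqo_on_derives_image_involution) (simp_all add: rev_shuffles)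

lemma wqo_on_derives_flip:
  "wqo_on (derives I) (lang_eps I) \<Longrightarrow> wqo_on (derives (map flip ` I)) (lang_eps (map flip ` I))"
  by (rule wqo_on_derives_image_involution) (simp_all add: map_shuffles comp_def)

theorem proposition6:
  fixes n :: nat and I :: "word set"
  assumes "I \<in> {
    {replicate n a @ [b], [a]}, {replicate n a @ [b], [b]},
    {replicate n b @ [a], [a]}, {replicate n b @ [a], [b]},
    {[b] @ replicate n a, [a]}, {[b] @ replicate n a, [b]},
    {[a] @ replicate n b, [a]}, {[a] @ replicate n b, [b]},
    {replicate n a @ [b], replicate n a}, {[b] @ replicate n a, replicate n a},
    {replicate n b @ [a], replicate n b}, {[a] @ replicate n b, replicate n b}}"
  shows "wqo_on (derives I) (lang_eps I)"
proof -
  let ?W = "\<lambda>J. wqo_on (derives J) (lang_eps J)"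
  have symmetric: "?W (rev ` J) \<and> ?W (map flip ` J) \<and> ?W (rev ` map flip ` J)" if "?W J" for J
    using that by (simp add: wqo_on_derives_rev wqo_on_derives_flip)
  from symmetric[OF wqo_on_derives_pow_a_b_and_a] symmetric[OF wqo_on_derives_a_pow_b_and_a]
    symmetric[OF wqo_on_derives_pow_a_b_and_pow_a] wqo_on_derives_pow_a_b_and_a
    wqo_on_derives_a_pow_b_and_a wqo_on_derives_pow_a_b_and_pow_a
  show ?thesis using assms by (auto simp: rev_replicate)
qed

end
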